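(* Let $n\ge1$ and let $\varphi\colon A\to B$ be a Frobenius $n$-homomorphism. Then $\psi_n(ab)=\psi_n(a)\psi_n(b)$ for all $a,b\in A$, where $\psi_n(a)$ is the coefficient of $z^n$ in $R_\varphi(a,z)$ (equivalently $\psi_n(a)=\frac1{n!}\Phi_n(a,\dots,a)$).
   Context: $\mathbb{K}=\mathbb{R}$ or $\mathbb{C}$; $A$ and $B$ are commutative associative unital $\mathbb{K}$-algebras. For a $\mathbb{K}$-linear map $\varphi\colon A\to B$ and $a\in A$, the characteristic function is $R_\varphi(a,z)=\exp\bigl(\varphi(\ln(1+az))\bigr)=1+\sum_{k\ge1}\psi_k(a)z^k\in B[[z]]$, with $\ln(1+az)=\sum_{k\ge1}(-1)^{k+1}a^kz^k/k$ and $\varphi$ applied coefficientwise. The Frobenius maps $\Phi_k\colon A^k\to B$ of $\varphi$ are defined by $\Phi_1=\varphi$ and $\Phi_{k+1}(a_1,\dots,a_{k+1})=\varphi(a_1)\Phi_k(a_2,\dots,a_{k+1})-\sum_{j=2}^{k+1}\Phi_k(a_2,\dots,a_{j-1},a_1a_j,a_{j+1},\dots,a_{k+1})$. A linear map $\varphi$ is a (Frobenius) $n$-homomorphism if $\varphi(1)=n\cdot1_B$ and $\Phi_k\equiv0$ for all $k\ge n+1$. *)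

theory Defs
  imports Complex_Main "HOL-Computational_Algebra.Formal_Power_Series"
begin

text \<open>Algebras are modelled as types of class comm_ring_1 and real_algebra_1
  (commutative associative unital real algebras); linearity is real linearity.\<close>

definition ln1p_fps :: "'a::{comm_ring_1,real_algebra_1} \<Rightarrow> 'a fps" where
  "ln1p_fps a = Abs_fps (\<lambda>k. if k = 0 then 0
      else ((-1) ^ (k + 1) / real k) *\<^sub>R a ^ k)"

definition fps_map :: "('a \<Rightarrow> 'b) \<Rightarrow> 'a fps \<Rightarrow> 'b::zero fps" where
  "fps_map f F = Abs_fps (\<lambda>k. f (fps_nth F k))"

text \<open>Exponential of a power series with zero constant term:
  exp F = sum over m of F^m / m!; only m \<le> k contributes to the coefficient of z^k.\<close>
definition fps_exp0 :: "'b::{comm_ring_1,real_algebra_1} fps \<Rightarrow> 'b fps" where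
  "fps_exp0 F = Abs_fps (\<lambda>k. \<Sum>m\<le>k. (1 / fact m) *\<^sub>R fps_nth (F ^ m) k)"

definition char_fun :: "('a::{comm_ring_1,real_algebra_1} \<Rightarrow> 'b::{comm_ring_1,real_algebra_1})
    \<Rightarrow> 'a \<Rightarrow> 'b fps" where
  "char_fun \<phi> a = fps_exp0 (fps_map \<phi> (ln1p_fps a))"

definition psi :: "('a::{comm_ring_1,real_algebra_1} \<Rightarrow> 'b::{comm_ring_1,real_algebra_1})
    \<Rightarrow> nat \<Rightarrow> 'a \<Rightarrow> 'b" where
  "psi \<phi> k a = fps_nth (char_fun \<phi> a) k"

text \<open>Frobenius maps: frob phi [a1,...,ak] = Phi_k(a1,...,ak) (value on [] is irrelevant).\<close>
function frob :: "('a::comm_ring_1 \<Rightarrow> 'b::comm_ring_1) \<Rightarrow> 'a list \<Rightarrow> 'b" where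
  "frob \<phi> [] = 0"
| "frob \<phi> [a] = \<phi> a"
| "frob \<phi> (a # b # cs) =
     \<phi> a * frob \<phi> (b # cs)
     - (\<Sum>j<length (b # cs). frob \<phi> ((b # cs)[j := a * (b # cs) ! j]))"
  by pat_completeness auto
termination
  by (relation "measure (\<lambda>(\<phi>, xs). length xs)") (auto split: nat.split)

definition frobenius_hom :: "nat \<Rightarrow> ('a::{comm_ring_1,real_algebra_1} \<Rightarrow> 'b::{comm_ring_1,real_algebra_1}) \<Rightarrow> bool" where
  "frobenius_hom n \<phi> \<longleftrightarrow> linear \<phi> \<and> \<phi> 1 = of_nat n \<and>
     (\<forall>k\<ge>n + 1. \<forall>xs. length xs = k \<longrightarrow> frob \<phi> xs = 0)"

end

theory Submission
  imports Defs
begin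

(* Fix b in A and a list xs = (x_0,...,x_{n-1}).  Let T_j multiply the j-th argument of
   Phi_n by b.  Because Phi_{n+1} vanishes, the recursion defining Phi_{n+1} says that the
   "power sums" T_0^i + ... + T_{n-1}^i act on Phi_n as the scalar phi(b^i).  Newton's
   identities then force the elementary symmetric expressions e_m(T) to act as scalars q_m
   obeying  m q_m = sum_{i=1..m} (-1)^(i-1) phi(b^i) q_{m-i}.  The characteristic function
   R = exp(phi(ln(1+bz))) satisfies R' = phi(ln(1+bz))' R, which is the same recursion for its
   coefficients, so q_m = psi_m(b).  For m = n this is the eigen relation
       Phi_n(x_0 b, ..., x_{n-1} b) = psi_n(b) Phi_n(x_0, ..., x_{n-1}).
   With all x_j = 1, where Phi_n(1,...,1) = n!, and applying the relation twice,
       n! psi_n(ab) = Phi_n(ab,...,ab) = psi_n(a) Phi_n(b,...,b) = n! psi_n(a) psi_n(b),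
   and n! cancels in a real algebra. *)

unbundle fps_syntax

lemma of_nat_mult_eq_scaleR:
  fixes v :: "'b::real_algebra_1"
  shows "of_nat k * v = real k *\<^sub>R v"
  by (simp add: scaleR_conv_of_real)

lemma of_nat_mult_cancel:
  fixes x z :: "'b::real_algebra_1"
  assumes "of_nat k * x = of_nat k * z" and "k \<noteq> 0"
  shows "x = z"
  using assms by (simp add: of_nat_mult_eq_scaleR)

section \<open>Newton's identities for commuting shift operators\<close>

text \<open>We work with a function H of exponent vectors c :: nat \<Rightarrow> nat; raising the exponent
  at position j plays the role of the operator T_j.  The k-element subsets of the positions
  index the terms of the k-th elementary symmetric expression.\<close>

definition subsets_of_card :: "nat \<Rightarrow> nat \<Rightarrow> nat set set" where
  "subsets_of_card n m = {S. S \<subseteq> {..<n} \<and> card S = m}"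

lemma finite_subsets_of_card [simp]: "finite (subsets_of_card n m)"
  unfolding subsets_of_card_def by (rule finite_subset[of _ "Pow {..<n}"]) auto

lemma subsets_of_card_finite_member: "S \<in> subsets_of_card n m \<Longrightarrow> finite S"
  unfolding subsets_of_card_def by (auto intro: finite_subset)

lemma subsets_of_card_0 [simp]: "subsets_of_card n 0 = {{}}"
  unfolding subsets_of_card_def by (auto simp: card_eq_0_iff dest: finite_subset[OF _ finite_lessThan])

lemma subsets_of_card_all [simp]: "subsets_of_card n n = {{..<n}}"
  unfolding subsets_of_card_def using card_subset_eq[OF finite_lessThan] by auto

text \<open>The hypothesis of the Newton argument: the i-th power sum of the operators acts on H
  as multiplication by the scalar y i.\<close>

definition power_sums_scalar :: "nat \<Rightarrow> ((nat \<Rightarrow> nat) \<Rightarrow> 'b::comm_ring_1) \<Rightarrow> (nat \<Rightarrow> 'b) \<Rightarrow> bool" where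
  "power_sums_scalar n H y \<longleftrightarrow>
     (\<forall>c i. i \<ge> 1 \<longrightarrow> (\<Sum>j<n. H (\<lambda>l. c l + (if l = j then i else 0))) = y i * H c)"

definition esym :: "((nat \<Rightarrow> nat) \<Rightarrow> 'b::comm_ring_1) \<Rightarrow> nat \<Rightarrow> nat \<Rightarrow> (nat \<Rightarrow> nat) \<Rightarrow> 'b" where
  "esym H n m c = (\<Sum>S\<in>subsets_of_card n m. H (\<lambda>l. c l + (if l \<in> S then 1 else 0)))"

definition shifted :: "((nat \<Rightarrow> nat) \<Rightarrow> 'b) \<Rightarrow> (nat \<Rightarrow> nat) \<Rightarrow> nat set \<Rightarrow> nat \<Rightarrow> nat \<Rightarrow> 'b" where
  "shifted H c S j i = H (\<lambda>l. c l + (if l \<in> S then 1 else 0) + (if l = j then i else 0))"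

text \<open>Multiplying e_m by the i-th power sum splits into terms with j outside resp. inside S.\<close>

definition mixed_out :: "((nat \<Rightarrow> nat) \<Rightarrow> 'b::comm_ring_1) \<Rightarrow> nat \<Rightarrow> (nat \<Rightarrow> nat) \<Rightarrow> nat \<Rightarrow> nat \<Rightarrow> 'b" where
  "mixed_out H n c m i = (\<Sum>S\<in>subsets_of_card n m. \<Sum>j\<in>{..<n} - S. shifted H c S j i)"

definition mixed_in :: "((nat \<Rightarrow> nat) \<Rightarrow> 'b::comm_ring_1) \<Rightarrow> nat \<Rightarrow> (nat \<Rightarrow> nat) \<Rightarrow> nat \<Rightarrow> nat \<Rightarrow> 'b" where
  "mixed_in H n c m i = (\<Sum>S\<in>subsets_of_card n m. \<Sum>j\<in>S. shifted H c S j i)"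

lemma shifted_insert: "j \<notin> S \<Longrightarrow> shifted H c (insert j S) j i = shifted H c S j (Suc i)"
  unfolding shifted_def by (rule arg_cong[where f=H]) auto

text \<open>Moving j from outside S into S identifies the two kinds of mixed terms:
  p_{i+1} e_m contributes the same terms as the part of p_i e_{m+1} with j in S.\<close>

lemma mixed_out_Suc: "mixed_out H n c m (Suc i) = mixed_in H n c (Suc m) i"
proof -
  have "mixed_out H n c m (Suc i) =
      (\<Sum>(S,j)\<in>Sigma (subsets_of_card n m) (\<lambda>S. {..<n} - S). shifted H c S j (Suc i))"
    unfolding mixed_out_def by (rule sum.Sigma) auto
  also have "\<dots> = (\<Sum>(S,j)\<in>Sigma (subsets_of_card n (Suc m)) (\<lambda>S. S). shifted H c S j i)"
  proof (rule sum.reindex_bij_witness[where i="\<lambda>(S,j). (S - {j}, j)" and j="\<lambda>(S,j). (insert j S, j)"])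
    fix a assume "a \<in> Sigma (subsets_of_card n (Suc m)) (\<lambda>S. S)"
    then obtain S j where [simp]: "a = (S,j)" and S: "S \<in> subsets_of_card n (Suc m)" "j \<in> S"
      by auto
    have "finite S" using S(1) by (rule subsets_of_card_finite_member)
    then show "(\<lambda>(S, j). (insert j S, j)) ((\<lambda>(S, j). (S - {j}, j)) a) = a"
      and "(\<lambda>(S, j). (S - {j}, j)) a \<in> Sigma (subsets_of_card n m) (\<lambda>S. {..<n} - S)"
      using S unfolding subsets_of_card_def by auto
  next
    fix a assume "a \<in> Sigma (subsets_of_card n m) (\<lambda>S. {..<n} - S)"
    then obtain S j where [simp]: "a = (S,j)"
      and S: "S \<in> subsets_of_card n m" "j < n" "j \<notin> S" by auto
    have "finite S" using S(1) by (rule subsets_of_card_finite_member)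
    then show "(\<lambda>(S, j). (S - {j}, j)) ((\<lambda>(S, j). (insert j S, j)) a) = a"
      and "(\<lambda>(S, j). (insert j S, j)) a \<in> Sigma (subsets_of_card n (Suc m)) (\<lambda>S. S)"
      and "(case (\<lambda>(S, j). (insert j S, j)) a of (S, j) \<Rightarrow> shifted H c S j i) =
           (case a of (S, j) \<Rightarrow> shifted H c S j (Suc i))"
      using S unfolding subsets_of_card_def by (auto simp: shifted_insert)
  qed
  also have "\<dots> = mixed_in H n c (Suc m) i"
    unfolding mixed_in_def
    by (rule sum.Sigma[symmetric]) (auto intro: subsets_of_card_finite_member)
  finally show ?thesis .
qed

lemma mixed_in_empty: "mixed_in H n c 0 i = 0"
  unfolding mixed_in_def by simp

text \<open>With no extra power, each term of e_k is counted once for each of its k positions.\<close>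

lemma mixed_in_no_power: "mixed_in H n c k 0 = of_nat k * esym H n k c"
  unfolding mixed_in_def esym_def sum_distrib_left
  by (rule sum.cong) (auto simp: shifted_def subsets_of_card_def)

lemma power_sum_times_esym:
  assumes "power_sums_scalar n H y" and "i \<ge> 1"
  shows "y i * esym H n m c = mixed_out H n c m i + mixed_in H n c m i"
proof -
  have "y i * esym H n m c = (\<Sum>S\<in>subsets_of_card n m. \<Sum>j<n. shifted H c S j i)"
    using assms unfolding esym_def sum_distrib_left shifted_def power_sums_scalar_def
    by (intro sum.cong) auto
  also have "\<dots> = (\<Sum>S\<in>subsets_of_card n m.
                     (\<Sum>j\<in>{..<n} - S. shifted H c S j i) + (\<Sum>j\<in>S. shifted H c S j i))"
    by (intro sum.cong refl sum.subset_diff) (auto simp: subsets_of_card_def)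
  finally show ?thesis unfolding mixed_out_def mixed_in_def sum.distrib .
qed

lemma alternating_telescope:
  fixes T :: "nat \<Rightarrow> 'b::comm_ring_1"
  shows "(\<Sum>i\<in>{1..r}. (-1)^(i-1) * (T i + T (Suc i))) = T 1 - (-1)^r * T (Suc r)"
proof (induction r)
  case 0
  then show ?case by simp
next
  case (Suc r)
  have "(\<Sum>i\<in>{1..Suc r}. (-1)^(i-1) * (T i + T (Suc i))) =
        (\<Sum>i\<in>{1..r}. (-1)^(i-1) * (T i + T (Suc i))) + (-1)^r * (T (Suc r) + T (Suc (Suc r)))"
    by simp
  then show ?case using Suc by (simp add: algebra_simps)
qed

text \<open>Newton's identity k e_k = sum_{i=1..k} (-1)^(i-1) p_i e_{k-i}: by the splitting above,
  the right-hand side telescopes with T i = mixed_out ... (k - i) i down to its first term.\<close>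

lemma newton_esym:
  assumes H: "power_sums_scalar n H y" and k: "k \<ge> 1"
  shows "of_nat k * esym H n k c = (\<Sum>i\<in>{1..k}. (-1)^(i-1) * (y i * esym H n (k-i) c))"
proof -
  define T where "T i = mixed_out H n c (k - i) i" for i
  have inner: "y i * esym H n (k-i) c = T i + T (Suc i)" if "1 \<le> i" "i < k" for i
  proof -
    have "mixed_in H n c (k-i) i = mixed_in H n c (Suc (k - Suc i)) i"
      using that by (simp add: Suc_diff_Suc)
    also have "\<dots> = T (Suc i)" unfolding T_def by (simp add: mixed_out_Suc)
    finally show ?thesis using power_sum_times_esym[OF H that(1)] unfolding T_def by simp
  qed
  have last: "y k * esym H n 0 c = T k"
    using power_sum_times_esym[OF H k] by (simp add: T_def mixed_in_empty)
  have first: "T 1 = of_nat k * esym H n k c"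
    using k mixed_out_Suc[of H n c "k - 1" 0] by (simp add: T_def mixed_in_no_power)
  have "{1..k} = insert k {1..k-1}" using k by auto
  then have "(\<Sum>i\<in>{1..k}. (-1)^(i-1) * (y i * esym H n (k-i) c)) =
      (-1)^(k-1) * (y k * esym H n 0 c) + (\<Sum>i\<in>{1..k-1}. (-1)^(i-1) * (y i * esym H n (k-i) c))"
    using k by simp
  also have "(\<Sum>i\<in>{1..k-1}. (-1)^(i-1) * (y i * esym H n (k-i) c)) =
      (\<Sum>i\<in>{1..k-1}. (-1)^(i-1) * (T i + T (Suc i)))"
    by (rule sum.cong) (auto simp: inner)
  also have "\<dots> = T 1 - (-1)^(k-1) * T (Suc (k-1))" by (rule alternating_telescope)
  finally show ?thesis using k last first by simp
qed

text \<open>Consequently every e_k acts as the scalar q k, for any sequence q obeying the same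
  Newton recursion; this needs to cancel the factor k, hence a real algebra.\<close>

lemma esym_scalar:
  fixes H :: "(nat \<Rightarrow> nat) \<Rightarrow> 'b::{comm_ring_1,real_algebra_1}"
  assumes H: "power_sums_scalar n H y"
    and q0: "q 0 = 1"
    and q_rec: "\<And>k. k \<ge> 1 \<Longrightarrow> of_nat k * q k = (\<Sum>i\<in>{1..k}. (-1)^(i-1) * (y i * q (k-i)))"
  shows "esym H n k c = q k * H c"
proof (induction k rule: less_induct)
  case (less k)
  show ?case
  proof (cases "k = 0")
    case True
    then show ?thesis by (simp add: esym_def q0)
  next
    case False
    then have k: "k \<ge> 1" by simp
    have "of_nat k * esym H n k c = (\<Sum>i\<in>{1..k}. (-1)^(i-1) * (y i * esym H n (k-i) c))"
      by (rule newton_esym[OF H k])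
    also have "\<dots> = (\<Sum>i\<in>{1..k}. (-1)^(i-1) * (y i * q (k-i))) * H c"
      unfolding sum_distrib_right by (rule sum.cong[OF refl]) (simp add: less.IH mult.assoc)
    also have "\<dots> = of_nat k * (q k * H c)"
      by (simp only: q_rec[OF k, symmetric] mult.assoc)
    finally show ?thesis using False by (rule of_nat_mult_cancel)
  qed
qed

lemma esym_all: "esym H n n c = H (\<lambda>l. c l + (if l < n then 1 else 0))"
  unfolding esym_def by simp

section \<open>The Newton recursion for psi\<close>

text \<open>Only exponents m \<le> k contribute to the k-th coefficient of exp F, so the truncation
  point of the defining sum can be raised freely.\<close>

lemma fps_exp0_nth_upto:
  fixes F :: "'b::{comm_ring_1,real_algebra_1} fps"
  assumes "F $ 0 = 0" and "N \<ge> k"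
  shows "fps_exp0 F $ k = (\<Sum>m\<le>N. (1 / fact m) *\<^sub>R ((F^m) $ k))"
  unfolding fps_exp0_def fps_nth_Abs_fps
  by (rule sum.mono_neutral_left) (use assms startsby_zero_power_prefix[OF assms(1)] in auto)

lemma scaleR_inverse_fact_Suc:
  fixes x :: "'b::real_algebra_1"
  shows "(1 / fact (Suc m)) *\<^sub>R (of_nat (Suc m) * x) = (1 / fact m) *\<^sub>R x"
proof -
  have "1 / fact (Suc m) * real (Suc m) = (1 / fact m :: real)"
    by (simp del: of_nat_Suc)
  then show ?thesis by (simp only: of_nat_mult_eq_scaleR scaleR_scaleR)
qed

lemma fps_exp0_deriv:
  fixes F :: "'b::{comm_ring_1,real_algebra_1} fps"
  assumes F0: "F $ 0 = 0"
  shows "fps_deriv (fps_exp0 F) = fps_deriv F * fps_exp0 F"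
proof (rule fps_ext)
  fix k
  have "fps_deriv (fps_exp0 F) $ k
      = of_nat (Suc k) * (\<Sum>m\<le>Suc k. (1 / fact m) *\<^sub>R ((F^m) $ Suc k))"
    by (simp only: fps_deriv_nth Suc_eq_plus1[symmetric] fps_exp0_nth_upto[OF F0 order_refl])
  also have "\<dots> = (\<Sum>m\<le>Suc k. (1 / fact m) *\<^sub>R (fps_deriv (F^m) $ k))"
    by (simp only: sum_distrib_left mult_scaleR_right fps_deriv_nth Suc_eq_plus1)
  also have "\<dots> = (\<Sum>m\<le>Suc k. (1 / fact m) *\<^sub>R (of_nat m * (fps_deriv F * F^(m-1)) $ k))"
    by (intro sum.cong refl) (simp add: fps_deriv_power mult.assoc)
  also have "\<dots> = (\<Sum>m\<le>k. (1 / fact m) *\<^sub>R ((fps_deriv F * F^m) $ k))"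
    by (subst sum.atMost_Suc_shift)
      (simp only: scaleR_inverse_fact_Suc diff_Suc_1 of_nat_0 mult_zero_left scaleR_zero_right add_0_left)
  also have "\<dots> = (\<Sum>i=0..k. fps_deriv F $ i * (\<Sum>m\<le>k. (1 / fact m) *\<^sub>R ((F^m) $ (k - i))))"
    by (simp only: fps_mult_nth scaleR_sum_right mult_scaleR_right sum_distrib_left)
      (rule sum.swap)
  also have "\<dots> = (fps_deriv F * fps_exp0 F) $ k"
    unfolding fps_mult_nth
    by (intro sum.cong refl arg_cong[where f="\<lambda>x. _ * x"] fps_exp0_nth_upto[OF F0, symmetric]) auto
  finally show "fps_deriv (fps_exp0 F) $ k = (fps_deriv F * fps_exp0 F) $ k" .
qed

lemma ln1p_map_nth:
  fixes \<phi> :: "'a::{comm_ring_1,real_algebra_1} \<Rightarrow> 'b::{comm_ring_1,real_algebra_1}"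
  assumes "linear \<phi>"
  shows "fps_map \<phi> (ln1p_fps b) $ j = (if j = 0 then 0 else ((-1)^(j+1) / real j) *\<^sub>R \<phi> (b^j))"
  unfolding fps_map_def ln1p_fps_def
  using linear_0[OF assms] linear_scale[OF assms] linear_neg[OF assms] by simp

lemma ln1p_map_deriv_nth:
  fixes \<phi> :: "'a::{comm_ring_1,real_algebra_1} \<Rightarrow> 'b::{comm_ring_1,real_algebra_1}"
  assumes "linear \<phi>"
  shows "fps_deriv (fps_map \<phi> (ln1p_fps b)) $ i = (-1)^i * \<phi> (b^(Suc i))"
proof -
  have "fps_deriv (fps_map \<phi> (ln1p_fps b)) $ i
      = of_nat (Suc i) * (((-1)^(i+2) / real (Suc i)) *\<^sub>R \<phi> (b^(Suc i)))"
    by (simp add: ln1p_map_nth[OF assms] del: of_nat_Suc)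
  also have "\<dots> = ((-1)^(i+2) / real (Suc i) * real (Suc i)) *\<^sub>R \<phi> (b^(Suc i))"
    by (simp only: mult_scaleR_right of_nat_mult_eq_scaleR scaleR_scaleR)
  also have "(-1)^(i+2) / real (Suc i) * real (Suc i) = (-1::real)^i"
    by (simp add: power_add)
  also have "(-1::real)^i *\<^sub>R \<phi> (b^(Suc i)) = (-1)^i * \<phi> (b^(Suc i))"
    by (simp add: scaleR_conv_of_real)
  finally show ?thesis .
qed

lemma psi_0: "psi \<phi> 0 b = 1"
  unfolding psi_def char_fun_def fps_exp0_def by simp

text \<open>Newton's recursion for the coefficients of the characteristic function, valid for every
  linear phi: compare the coefficients of z^(k-1) in R' = phi(ln(1+bz))' R.\<close>

lemma psi_newton:
  fixes \<phi> :: "'a::{comm_ring_1,real_algebra_1} \<Rightarrow> 'b::{comm_ring_1,real_algebra_1}"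
  assumes lin: "linear \<phi>" and k: "k \<ge> 1"
  shows "of_nat k * psi \<phi> k b = (\<Sum>i\<in>{1..k}. (-1)^(i-1) * (\<phi> (b^i) * psi \<phi> (k-i) b))"
proof -
  define F where "F = fps_map \<phi> (ln1p_fps b)"
  define R where "R = fps_exp0 F"
  have F0: "F $ 0 = 0" unfolding F_def by (simp add: ln1p_map_nth[OF lin])
  obtain k' where k': "k = Suc k'" using k by (cases k) auto
  have "of_nat k * R $ k = fps_deriv R $ k'"
    by (simp add: k' del: of_nat_Suc)
  also have "\<dots> = (\<Sum>i=0..k'. fps_deriv F $ i * R $ (k' - i))"
    unfolding R_def fps_exp0_deriv[OF F0] fps_mult_nth ..
  also have "\<dots> = (\<Sum>i=0..k'. (-1)^i * (\<phi> (b^(Suc i)) * R $ (k' - i)))"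
    unfolding F_def ln1p_map_deriv_nth[OF lin] mult.assoc ..
  also have "\<dots> = (\<Sum>i\<in>{1..k}. (-1)^(i-1) * (\<phi> (b^i) * R $ (k-i)))"
    by (simp only: k' One_nat_def sum.shift_bounds_cl_Suc_ivl) simp
  finally show ?thesis unfolding psi_def char_fun_def R_def F_def .
qed

section \<open>Frobenius maps\<close>

text \<open>Vanishing of Phi_{n+1}, unfolded: multiplying Phi_n by phi(x) distributes x over the
  arguments of Phi_n.\<close>

lemma frob_distrib:
  assumes "frobenius_hom n \<phi>" and "n \<ge> 1" and "length ys = n"
  shows "\<phi> x * frob \<phi> ys = (\<Sum>j<n. frob \<phi> (ys[j := x * ys!j]))"
proof -
  obtain y ys' where ys: "ys = y # ys'" using assms(2,3) by (cases ys) auto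
  have "frob \<phi> (x # ys) = 0" using assms(1,3) unfolding frobenius_hom_def by auto
  moreover have "frob \<phi> (x # ys) = \<phi> x * frob \<phi> ys - (\<Sum>j<length ys. frob \<phi> (ys[j := x * ys!j]))"
    unfolding ys by (rule frob.simps(3))
  ultimately show ?thesis using assms(3) by simp
qed

lemma frob_replicate_one:
  assumes one: "\<phi> 1 = of_nat n"
  shows "m \<ge> 1 \<Longrightarrow> m \<le> n \<Longrightarrow> frob \<phi> (replicate m 1) = of_nat (\<Prod>i<m. n - i)"
proof (induction m rule: nat_induct_at_least)
  case base
  then show ?case using one by simp
next
  case (Suc m)
  obtain m' where m': "m = Suc m'" using Suc(1) by (cases m) auto
  have "frob \<phi> (replicate (Suc m) 1) = \<phi> 1 * frob \<phi> (replicate m 1) - (\<Sum>j<m. frob \<phi> (replicate m 1))"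
    using m' by simp
  also have "\<dots> = (of_nat n - of_nat m) * of_nat (\<Prod>i<m. n - i)"
    using Suc one by (simp add: algebra_simps)
  also have "\<dots> = of_nat ((n - m) * (\<Prod>i<m. n - i))"
    using Suc by simp
  finally show ?case by (simp add: mult.commute)
qed

lemma frob_replicate_one_fact:
  assumes "\<phi> 1 = of_nat n" and "n \<ge> 1"
  shows "frob \<phi> (replicate n 1) = of_nat (fact n)"
proof -
  have "(\<Prod>i<n. n - i) = fact n"
    using fact_prod_rev[of n, where 'a=nat] by (simp add: atLeast0LessThan)
  then show ?thesis using frob_replicate_one[of \<phi> n n, OF assms order_refl] by simp
qed

text \<open>Phi_n(x_0 b, ..., x_{n-1} b) = psi_n(b) Phi_n(x_0, ..., x_{n-1}): apply the Newton
  argument to H c = Phi_n(x_0 b^(c 0), ..., x_{n-1} b^(c (n-1))).\<close>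

lemma frob_scale_eigen:
  fixes \<phi> :: "'a::{comm_ring_1,real_algebra_1} \<Rightarrow> 'b::{comm_ring_1,real_algebra_1}"
  assumes hom: "frobenius_hom n \<phi>" and n1: "n \<ge> 1" and len: "length xs = n"
  shows "frob \<phi> (map (\<lambda>x. x * b) xs) = psi \<phi> n b * frob \<phi> xs"
proof -
  define H where "H c = frob \<phi> (map (\<lambda>j. xs!j * b^(c j)) [0..<n])" for c
  have lin: "linear \<phi>" using hom unfolding frobenius_hom_def by simp
  have "power_sums_scalar n H (\<lambda>i. \<phi> (b^i))"
    unfolding power_sums_scalar_def
  proof (intro allI impI)
    fix c i
    let ?ys = "map (\<lambda>j. xs!j * b^(c j)) [0..<n]"
    have "?ys[j := b^i * ?ys!j] = map (\<lambda>l. xs!l * b^(c l + (if l = j then i else 0))) [0..<n]"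
      if "j < n" for j
      using that by (intro nth_equalityI) (auto simp: nth_list_update power_add algebra_simps)
    then show "(\<Sum>j<n. H (\<lambda>l. c l + (if l = j then i else 0))) = \<phi> (b^i) * H c"
      using frob_distrib[OF hom n1, of ?ys "b^i"] unfolding H_def by simp
  qed
  then have "esym H n n (\<lambda>_. 0) = psi \<phi> n b * H (\<lambda>_. 0)"
    by (rule esym_scalar[where q="\<lambda>k. psi \<phi> k b"]) (use psi_0 psi_newton[OF lin] in auto)
  moreover have "H (\<lambda>_. 0) = frob \<phi> xs"
    unfolding H_def using len by (intro arg_cong[where f="frob \<phi>"] nth_equalityI) auto
  moreover have "esym H n n (\<lambda>_. 0) = frob \<phi> (map (\<lambda>x. x * b) xs)"
    unfolding esym_all H_def using len by (intro arg_cong[where f="frob \<phi>"] nth_equalityI) auto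
  ultimately show ?thesis by simp
qed

theorem mainTheorem7:
  fixes \<phi> :: "'a::{comm_ring_1,real_algebra_1} \<Rightarrow> 'b::{comm_ring_1,real_algebra_1}"
    and n :: nat
  assumes "n \<ge> 1"
    and "frobenius_hom n \<phi>"
  shows "\<forall>a b. psi \<phi> n (a * b) = psi \<phi> n a * psi \<phi> n b"
proof (intro allI)
  fix a b :: 'a
  have ones: "frob \<phi> (replicate n 1) = of_nat (fact n)"
    using assms by (intro frob_replicate_one_fact) (simp_all add: frobenius_hom_def)
  note eigen = frob_scale_eigen[OF assms(2,1)]
  have "of_nat (fact n) * psi \<phi> n (a * b) = frob \<phi> (replicate n (b * a))"
    using eigen[of "replicate n 1" "a * b"] ones by (simp add: mult.commute)
  also have "\<dots> = psi \<phi> n a * frob \<phi> (replicate n b)"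
    using eigen[of "replicate n b" a] by simp
  also have "\<dots> = of_nat (fact n) * (psi \<phi> n a * psi \<phi> n b)"
    using eigen[of "replicate n 1" b] ones by (simp add: mult.commute mult.left_commute)
  finally show "psi \<phi> n (a * b) = psi \<phi> n a * psi \<phi> n b"
    by (rule of_nat_mult_cancel) simp
qed

end
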